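(* Let $A$ be a two-dimensional evolution algebra over a field $\mathbb{K}$. (i) If $A^2=A$ and for every natural basis $\{e_1,e_2\}$ of $A$, writing $e_1^2=\omega_{11}e_1+\omega_{21}e_2$ and $e_2^2=\omega_{12}e_1+\omega_{22}e_2$, one has $\omega_{12}\neq0$ and $\omega_{21}\neq0$, then $A$ is simple. (ii) If $A$ is simple, then for every natural basis $\{e_1,e_2\}$ of $A$ (with the same notation) one has $\omega_{12}\neq0$ and $\omega_{21}\neq0$.
   Context: An evolution algebra over $\mathbb{K}$ is a $\mathbb{K}$-algebra $A$ with a basis $\{e_i\}$ (a natural basis) such that $e_ie_j=0$ for $i\neq j$. In the paper's language, $\omega_{12}\neq0$ and $\omega_{21}\neq0$ means that the top and bottom edges appear in the pseudo-square relative to that basis. $A$ is simple if $A^2\neq0$ and its only ideals are $0$ and $A$. *)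

theory Defs
  imports Main
begin

text \<open>A two-dimensional vector space over a field 'k is modelled (up to isomorphism)
  as 'k \<times> 'k with componentwise operations; an algebra structure is a bilinear map.\<close>

definition vadd :: "'k::field \<times> 'k \<Rightarrow> 'k \<times> 'k \<Rightarrow> 'k \<times> 'k" where
  "vadd x y = (fst x + fst y, snd x + snd y)"

definition smul :: "'k::field \<Rightarrow> 'k \<times> 'k \<Rightarrow> 'k \<times> 'k" where
  "smul c x = (c * fst x, c * snd x)"

definition vzero :: "'k::field \<times> 'k" where
  "vzero = (0, 0)"

definition bilinear_mul :: "('k::field \<times> 'k \<Rightarrow> 'k \<times> 'k \<Rightarrow> 'k \<times> 'k) \<Rightarrow> bool" where
  "bilinear_mul m \<longleftrightarrow>
     (\<forall>x y z. m (vadd x y) z = vadd (m x z) (m y z)) \<and>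
     (\<forall>x y z. m x (vadd y z) = vadd (m x y) (m x z)) \<and>
     (\<forall>c x y. m (smul c x) y = smul c (m x y)) \<and>
     (\<forall>c x y. m x (smul c y) = smul c (m x y))"

definition subspace2 :: "('k::field \<times> 'k) set \<Rightarrow> bool" where
  "subspace2 S \<longleftrightarrow> vzero \<in> S \<and> (\<forall>x\<in>S. \<forall>y\<in>S. vadd x y \<in> S) \<and> (\<forall>c. \<forall>x\<in>S. smul c x \<in> S)"

text \<open>In dimension 2, a basis is a linearly independent ordered pair.\<close>
definition lin_indep2 :: "'k::field \<times> 'k \<Rightarrow> 'k \<times> 'k \<Rightarrow> bool" where
  "lin_indep2 e1 e2 \<longleftrightarrow> (\<forall>a b. vadd (smul a e1) (smul b e2) = vzero \<longrightarrow> a = 0 \<and> b = 0)"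

definition natural_basis :: "('k::field \<times> 'k \<Rightarrow> 'k \<times> 'k \<Rightarrow> 'k \<times> 'k) \<Rightarrow> 'k \<times> 'k \<Rightarrow> 'k \<times> 'k \<Rightarrow> bool" where
  "natural_basis m e1 e2 \<longleftrightarrow> lin_indep2 e1 e2 \<and> m e1 e2 = vzero \<and> m e2 e1 = vzero"

definition evolution_algebra2 :: "('k::field \<times> 'k \<Rightarrow> 'k \<times> 'k \<Rightarrow> 'k \<times> 'k) \<Rightarrow> bool" where
  "evolution_algebra2 m \<longleftrightarrow> bilinear_mul m \<and> (\<exists>e1 e2. natural_basis m e1 e2)"

definition alg_square :: "('k::field \<times> 'k \<Rightarrow> 'k \<times> 'k \<Rightarrow> 'k \<times> 'k) \<Rightarrow> ('k \<times> 'k) set" where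
  "alg_square m = \<Inter>{S. subspace2 S \<and> (\<forall>x y. m x y \<in> S)}"

definition alg_ideal :: "('k::field \<times> 'k \<Rightarrow> 'k \<times> 'k \<Rightarrow> 'k \<times> 'k) \<Rightarrow> ('k \<times> 'k) set \<Rightarrow> bool" where
  "alg_ideal m I \<longleftrightarrow> subspace2 I \<and> (\<forall>x\<in>I. \<forall>y. m x y \<in> I \<and> m y x \<in> I)"

definition simple_alg :: "('k::field \<times> 'k \<Rightarrow> 'k \<times> 'k \<Rightarrow> 'k \<times> 'k) \<Rightarrow> bool" where
  "simple_alg m \<longleftrightarrow> alg_square m \<noteq> {vzero} \<and> (\<forall>I. alg_ideal m I \<longrightarrow> I = {vzero} \<or> I = UNIV)"

end

theory Submission
  imports Defs
begin

text \<open>Fix a natural basis \<open>e\<^sub>1, e\<^sub>2\<close> with \<open>e\<^sub>1\<^sup>2 = u\<close>, \<open>e\<^sub>2\<^sup>2 = v\<close>; the product of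
  \<open>a\<^sub>1e\<^sub>1 + b\<^sub>1e\<^sub>2\<close> and \<open>a\<^sub>2e\<^sub>1 + b\<^sub>2e\<^sub>2\<close> is \<open>a\<^sub>1a\<^sub>2u + b\<^sub>1b\<^sub>2v\<close>, so \<open>A\<^sup>2\<close> is the span of \<open>u, v\<close>.
  If \<open>\<omega>\<^sub>1\<^sub>2 = 0\<close> then \<open>v\<close> lies on the line \<open>\<KK>e\<^sub>2\<close>, which is then a proper nonzero ideal;
  symmetrically for \<open>\<omega>\<^sub>2\<^sub>1\<close>. Conversely, if \<open>A\<^sup>2 = A\<close> then \<open>u, v\<close> are independent, and
  a nonzero \<open>x = ae\<^sub>1 + be\<^sub>2\<close> in an ideal \<open>I\<close> puts \<open>au\<close> and \<open>bv\<close> into \<open>I\<close>: when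
  \<open>a, b \<noteq> 0\<close> these span \<open>A\<close>, and when one coefficient vanishes \<open>x\<close> itself together with
  \<open>au\<close> or \<open>bv\<close> spans \<open>A\<close> because \<open>\<omega>\<^sub>2\<^sub>1, \<omega>\<^sub>1\<^sub>2 \<noteq> 0\<close>.\<close>

definition det2 :: "'k::field \<times> 'k \<Rightarrow> 'k \<times> 'k \<Rightarrow> 'k" where
  "det2 x y = fst x * snd y - snd x * fst y"

definition span1 :: "'k::field \<times> 'k \<Rightarrow> ('k \<times> 'k) set" where
  "span1 e = range (\<lambda>c. smul c e)"

lemma vadd_smul_vzero_simps [simp]:
  "smul c vzero = vzero" "vadd vzero x = x" "vadd x vzero = x"
  by (auto simp: smul_def vadd_def vzero_def)

lemma det2_smul: "det2 (smul a x) (smul b y) = a * b * det2 x y"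
  by (simp add: det2_def smul_def algebra_simps)

lemma det2_nonzero_imp_lin_indep2:
  assumes "det2 x y \<noteq> 0"
  shows "lin_indep2 x y"
  unfolding lin_indep2_def
proof (intro allI impI)
  fix a b assume "vadd (smul a x) (smul b y) = vzero"
  then have h1: "a * fst x + b * fst y = 0" and h2: "a * snd x + b * snd y = 0"
    by (auto simp: vadd_def smul_def vzero_def)
  have "a * det2 x y = snd y * (a * fst x + b * fst y) - fst y * (a * snd x + b * snd y)"
    by (simp add: det2_def algebra_simps)
  moreover have "b * det2 x y = fst x * (a * snd x + b * snd y) - snd x * (a * fst x + b * fst y)"
    by (simp add: det2_def algebra_simps)
  ultimately show "a = 0 \<and> b = 0" unfolding h1 h2 using assms by simp
qed

lemma lin_indep2_imp_det2_nonzero: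
  assumes li: "lin_indep2 x y"
  shows "det2 x y \<noteq> 0"
proof
  assume d: "det2 x y = 0"
  show False
  proof (cases "y = vzero")
    case True
    then have "vadd (smul 0 x) (smul 1 y) = vzero" by (simp add: vadd_def smul_def vzero_def)
    then show False using li unfolding lin_indep2_def by fastforce
  next
    case False
    have "vadd (smul (snd y) x) (smul (- snd x) y) = vzero"
         "vadd (smul (fst y) x) (smul (- fst x) y) = vzero"
      using d by (auto simp: vadd_def smul_def vzero_def det2_def algebra_simps)
    then have "snd y = 0 \<and> fst y = 0" using li unfolding lin_indep2_def by blast
    then show False using False by (simp add: vzero_def prod_eq_iff)
  qed
qed

lemma lin_indep2_iff_det2: "lin_indep2 x y \<longleftrightarrow> det2 x y \<noteq> 0"
  using det2_nonzero_imp_lin_indep2 lin_indep2_imp_det2_nonzero by blast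

lemma natural_basis_det2: "natural_basis m e1 e2 \<Longrightarrow> det2 e1 e2 \<noteq> 0"
  by (simp add: natural_basis_def lin_indep2_iff_det2)

lemma natural_basis_swap: "natural_basis m e1 e2 \<Longrightarrow> natural_basis m e2 e1"
  unfolding natural_basis_def lin_indep2_iff_det2 det2_def by (auto simp: algebra_simps)

text \<open>Cramer's rule.\<close>
lemma coords_exist:
  assumes "det2 e1 e2 \<noteq> 0"
  obtains a b where "x = vadd (smul a e1) (smul b e2)"
proof
  let ?d = "det2 e1 e2"
  have "((fst x * snd e2 - snd x * fst e2) / ?d) * fst e1
          + ((fst e1 * snd x - snd e1 * fst x) / ?d) * fst e2 = (fst x * ?d) / ?d"
       "((fst x * snd e2 - snd x * fst e2) / ?d) * snd e1
          + ((fst e1 * snd x - snd e1 * fst x) / ?d) * snd e2 = (snd x * ?d) / ?d"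
    by (simp_all add: add_divide_distrib[symmetric] det2_def algebra_simps)
  then show "x = vadd (smul ((fst x * snd e2 - snd x * fst e2) / ?d) e1)
                      (smul ((fst e1 * snd x - snd e1 * fst x) / ?d) e2)"
    using assms by (simp add: prod_eq_iff vadd_def smul_def)
qed

lemma subspace2_eq_UNIV_if_det2:
  assumes "subspace2 I" "x \<in> I" "y \<in> I" "det2 x y \<noteq> 0"
  shows "I = UNIV"
proof -
  have "z \<in> I" for z
  proof -
    obtain a b where "z = vadd (smul a x) (smul b y)" using coords_exist[OF assms(4)] .
    then show ?thesis using assms(1-3) unfolding subspace2_def by auto
  qed
  then show ?thesis by auto
qed

lemma subspace2_span1: "subspace2 (span1 e)"
  unfolding subspace2_def span1_def
proof (intro conjI ballI allI)
  show "vzero \<in> range (\<lambda>c. smul c e)"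
    by (rule range_eqI[of _ _ 0]) (simp add: smul_def vzero_def)
next
  fix x y assume "x \<in> range (\<lambda>c. smul c e)" "y \<in> range (\<lambda>c. smul c e)"
  then obtain a b where "x = smul a e" "y = smul b e" by auto
  then show "vadd x y \<in> range (\<lambda>c. smul c e)"
    by (intro range_eqI[of _ _ "a + b"]) (simp add: smul_def vadd_def algebra_simps)
next
  fix c x assume "x \<in> range (\<lambda>c. smul c e)"
  then obtain a where "x = smul a e" by auto
  then show "smul c x \<in> range (\<lambda>c. smul c e)"
    by (intro range_eqI[of _ _ "c * a"]) (simp add: smul_def algebra_simps)
qed

lemma subspace2_kernel: "subspace2 {z. \<alpha> * fst z + \<beta> * snd z = 0}"
  unfolding subspace2_def
  by (auto simp: vzero_def vadd_def smul_def algebra_simps)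
     (metis mult_zero_right distrib_left mult.left_commute)

lemma det2_eq_0_imp_common_annihilator:
  assumes "det2 u v = 0"
  obtains \<alpha> \<beta> where "\<alpha> \<noteq> 0 \<or> \<beta> \<noteq> 0"
    "\<alpha> * fst u + \<beta> * snd u = 0" "\<alpha> * fst v + \<beta> * snd v = 0"
proof (cases "u = vzero")
  case False
  then show ?thesis using assms
    by (intro that[of "snd u" "- fst u"]) (auto simp: vzero_def prod_eq_iff det2_def algebra_simps)
next
  case u: True
  show ?thesis
  proof (cases "v = vzero")
    case False
    then show ?thesis using u
      by (intro that[of "snd v" "- fst v"]) (auto simp: vzero_def prod_eq_iff algebra_simps)
  next
    case True
    then show ?thesis using u by (intro that[of 1 0]) (auto simp: vzero_def)
  qed
qed

lemma bilinear_mulD: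
  assumes "bilinear_mul m"
  shows "m (vadd x y) z = vadd (m x z) (m y z)" "m x (vadd y z) = vadd (m x y) (m x z)"
        "m (smul c x) y = smul c (m x y)" "m x (smul c y) = smul c (m x y)"
  using assms unfolding bilinear_mul_def by blast+

lemma natural_basis_mul:
  assumes "bilinear_mul m" "natural_basis m e1 e2"
  shows "m (vadd (smul a1 e1) (smul b1 e2)) (vadd (smul a2 e1) (smul b2 e2))
         = vadd (smul (a1 * a2) (m e1 e1)) (smul (b1 * b2) (m e2 e2))"
  using assms(2) unfolding natural_basis_def
  by (simp add: bilinear_mulD[OF assms(1)]) (simp add: smul_def vadd_def algebra_simps)

lemma natural_basis_mul_basis:
  assumes "bilinear_mul m" "natural_basis m e1 e2"
  shows "m (vadd (smul a e1) (smul b e2)) e1 = smul a (m e1 e1)"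
        "m (vadd (smul a e1) (smul b e2)) e2 = smul b (m e2 e2)"
  using assms(2) unfolding natural_basis_def by (simp_all add: bilinear_mulD[OF assms(1)])

lemma alg_ideal_span1:
  assumes bm: "bilinear_mul m" and nb: "natural_basis m e1 e2" and sq: "m e2 e2 = smul w e2"
  shows "alg_ideal m (span1 e2)"
  unfolding alg_ideal_def
proof (intro conjI ballI allI subspace2_span1)
  fix x y assume "x \<in> span1 e2"
  then obtain c where x: "x = smul c e2" unfolding span1_def by auto
  obtain a b where y: "y = vadd (smul a e1) (smul b e2)"
    using coords_exist[OF natural_basis_det2[OF nb]] .
  have z: "m e1 e2 = vzero" "m e2 e1 = vzero" using nb unfolding natural_basis_def by auto
  have "m x y = smul (c * b * w) e2" "m y x = smul (c * b * w) e2"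
    unfolding x y by (simp_all add: bilinear_mulD[OF bm] z sq)
                     (simp_all add: smul_def vadd_def algebra_simps)
  then show "m x y \<in> span1 e2" "m y x \<in> span1 e2" unfolding span1_def by auto
qed

lemma not_simple_if_square_in_span1:
  assumes bm: "bilinear_mul m" and nb: "natural_basis m e1 e2" and sq: "m e2 e2 = smul w e2"
  shows "\<not> simple_alg m"
proof
  assume "simple_alg m"
  then have "span1 e2 = {vzero} \<or> span1 e2 = UNIV"
    using alg_ideal_span1[OF assms] unfolding simple_alg_def by blast
  moreover have d: "det2 e1 e2 \<noteq> 0" using natural_basis_det2[OF nb] .
  then have "e2 \<noteq> vzero" by (auto simp: det2_def vzero_def)
  moreover have "e2 \<in> span1 e2"
    unfolding span1_def by (rule range_eqI[of _ _ 1]) (simp add: smul_def)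
  moreover have "e1 \<notin> span1 e2"
  proof
    assume "e1 \<in> span1 e2"
    then obtain c where "e1 = smul c e2" unfolding span1_def by auto
    then show False using d by (simp add: det2_def smul_def algebra_simps)
  qed
  ultimately show False by auto
qed

text \<open>A dependent pair of squares leaves \<open>A\<^sup>2\<close> inside the kernel of a nonzero functional.\<close>
lemma alg_square_UNIV_imp_det2_squares:
  assumes bm: "bilinear_mul m" and nb: "natural_basis m e1 e2" and A2: "alg_square m = UNIV"
  shows "det2 (m e1 e1) (m e2 e2) \<noteq> 0"
proof
  assume "det2 (m e1 e1) (m e2 e2) = 0"
  then obtain \<alpha> \<beta> where ab: "\<alpha> \<noteq> 0 \<or> \<beta> \<noteq> 0"
    "\<alpha> * fst (m e1 e1) + \<beta> * snd (m e1 e1) = 0" "\<alpha> * fst (m e2 e2) + \<beta> * snd (m e2 e2) = 0"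
    by (rule det2_eq_0_imp_common_annihilator)
  let ?T = "{z. \<alpha> * fst z + \<beta> * snd z = 0}"
  have "m x y \<in> ?T" for x y
  proof -
    obtain a1 b1 where x: "x = vadd (smul a1 e1) (smul b1 e2)"
      using coords_exist[OF natural_basis_det2[OF nb]] .
    obtain a2 b2 where y: "y = vadd (smul a2 e1) (smul b2 e2)"
      using coords_exist[OF natural_basis_det2[OF nb]] .
    have "\<alpha> * (a1 * a2 * fst (m e1 e1) + b1 * b2 * fst (m e2 e2))
          + \<beta> * (a1 * a2 * snd (m e1 e1) + b1 * b2 * snd (m e2 e2))
        = a1 * a2 * (\<alpha> * fst (m e1 e1) + \<beta> * snd (m e1 e1))
          + b1 * b2 * (\<alpha> * fst (m e2 e2) + \<beta> * snd (m e2 e2))"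
      by (simp add: algebra_simps)
    then show ?thesis using ab(2,3) unfolding x y natural_basis_mul[OF bm nb]
      by (simp add: vadd_def smul_def)
  qed
  then have "alg_square m \<subseteq> ?T"
    using subspace2_kernel unfolding alg_square_def by blast
  then have "(1, 0) \<in> ?T" "(0, 1) \<in> ?T" unfolding A2 by blast+
  then show False using ab(1) by auto
qed

lemma nonzero_ideal_eq_UNIV:
  assumes bm: "bilinear_mul m" and nb: "natural_basis m e1 e2"
    and sq1: "m e1 e1 = vadd (smul w11 e1) (smul w21 e2)"
    and sq2: "m e2 e2 = vadd (smul w12 e1) (smul w22 e2)"
    and w: "w12 \<noteq> 0" "w21 \<noteq> 0" and dsq: "det2 (m e1 e1) (m e2 e2) \<noteq> 0"
    and I: "alg_ideal m I" "I \<noteq> {vzero}"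
  shows "I = UNIV"
proof -
  have sub: "subspace2 I" using I(1) unfolding alg_ideal_def by auto
  then have "vzero \<in> I" unfolding subspace2_def by auto
  then obtain x where x: "x \<in> I" "x \<noteq> vzero" using I(2) by auto
  have d: "det2 e1 e2 \<noteq> 0" using natural_basis_det2[OF nb] .
  obtain a b where ab: "x = vadd (smul a e1) (smul b e2)" using coords_exist[OF d] .
  have u: "smul a (m e1 e1) \<in> I" and v: "smul b (m e2 e2) \<in> I"
    using I(1) x(1) natural_basis_mul_basis[OF bm nb, of a b]
    unfolding alg_ideal_def ab by metis+
  consider "a = 0" "b \<noteq> 0" | "a \<noteq> 0" "b = 0" | "a \<noteq> 0" "b \<noteq> 0"
    using x(2) ab by (fastforce simp: vadd_def smul_def vzero_def)
  then show ?thesis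
  proof cases
    case 1
    have "det2 x (smul b (m e2 e2)) \<noteq> 0"
      using 1 w d unfolding ab sq2 by (simp add: det2_def vadd_def smul_def algebra_simps)
    then show ?thesis using subspace2_eq_UNIV_if_det2[OF sub x(1) v] by simp
  next
    case 2
    have "det2 x (smul a (m e1 e1)) \<noteq> 0"
      using 2 w d unfolding ab sq1 by (simp add: det2_def vadd_def smul_def algebra_simps)
    then show ?thesis using subspace2_eq_UNIV_if_det2[OF sub x(1) u] by simp
  next
    case 3
    then show ?thesis using subspace2_eq_UNIV_if_det2[OF sub u v] dsq by (simp add: det2_smul)
  qed
qed

theorem proposition2p3:
  fixes m :: "'k::field \<times> 'k \<Rightarrow> 'k \<times> 'k \<Rightarrow> 'k \<times> 'k"
  assumes "evolution_algebra2 m"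
  shows "(alg_square m = UNIV \<and>
          (\<forall>e1 e2 w11 w21 w12 w22. natural_basis m e1 e2 \<and>
              m e1 e1 = vadd (smul w11 e1) (smul w21 e2) \<and>
              m e2 e2 = vadd (smul w12 e1) (smul w22 e2) \<longrightarrow> w12 \<noteq> 0 \<and> w21 \<noteq> 0)
          \<longrightarrow> simple_alg m)
       \<and> (simple_alg m \<longrightarrow>
          (\<forall>e1 e2 w11 w21 w12 w22. natural_basis m e1 e2 \<and>
              m e1 e1 = vadd (smul w11 e1) (smul w21 e2) \<and>
              m e2 e2 = vadd (smul w12 e1) (smul w22 e2) \<longrightarrow> w12 \<noteq> 0 \<and> w21 \<noteq> 0))"
proof (rule conjI; intro impI allI)
  have bm: "bilinear_mul m" using assms unfolding evolution_algebra2_def by auto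
  {
    fix e1 e2 w11 w21 w12 w22
    assume "simple_alg m" and h: "natural_basis m e1 e2 \<and>
              m e1 e1 = vadd (smul w11 e1) (smul w21 e2) \<and>
              m e2 e2 = vadd (smul w12 e1) (smul w22 e2)"
    then show "w12 \<noteq> 0 \<and> w21 \<noteq> 0"
      using not_simple_if_square_in_span1[OF bm, of e1 e2 w22]
            not_simple_if_square_in_span1[OF bm natural_basis_swap, of e1 e2 w11]
      by (auto simp: vadd_def smul_def)
  }
  assume H: "alg_square m = UNIV \<and>
          (\<forall>e1 e2 w11 w21 w12 w22. natural_basis m e1 e2 \<and>
              m e1 e1 = vadd (smul w11 e1) (smul w21 e2) \<and>
              m e2 e2 = vadd (smul w12 e1) (smul w22 e2) \<longrightarrow> w12 \<noteq> 0 \<and> w21 \<noteq> 0)"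
  obtain e1 e2 where nb: "natural_basis m e1 e2" using assms unfolding evolution_algebra2_def by auto
  obtain w11 w21 where sq1: "m e1 e1 = vadd (smul w11 e1) (smul w21 e2)"
    using coords_exist[OF natural_basis_det2[OF nb]] .
  obtain w12 w22 where sq2: "m e2 e2 = vadd (smul w12 e1) (smul w22 e2)"
    using coords_exist[OF natural_basis_det2[OF nb]] .
  have "w12 \<noteq> 0" "w21 \<noteq> 0" using H nb sq1 sq2 by blast+
  moreover have "det2 (m e1 e1) (m e2 e2) \<noteq> 0"
    using alg_square_UNIV_imp_det2_squares[OF bm nb] H by blast
  moreover have "alg_square m \<noteq> {vzero}"
    using H by (metis UNIV_I singletonD prod.inject vzero_def zero_neq_one)
  ultimately show "simple_alg m"
    unfolding simple_alg_def using nonzero_ideal_eq_UNIV[OF bm nb sq1 sq2] by blast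
qed

end
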